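(* For every graph $G$ and integer $m\ge1$, the lexicographic product $G\circ mK_1$ is well-bicovered if and only if $G$ is well-bicovered.
   Context: All graphs are finite and simple; "subgraph" means induced subgraph. $mK_1$ is the edgeless graph on $m$ vertices. A graph is well-bicovered if every vertex-inclusion-maximal induced bipartite subgraph has the same order. The lexicographic product $G\circ H$ has vertex set $V(G)\times V(H)$, with $(u,v)$ adjacent to $(x,y)$ iff $ux\in E(G)$, or $u=x$ and $vy\in E(H)$. *)

theory Defs
  imports Main
begin

text \<open>A finite simple graph is given by a vertex set V and an edge relation E;
only edges between vertices of V are relevant.\<close>

definition simple_graph :: "'a set \<Rightarrow> ('a \<Rightarrow> 'a \<Rightarrow> bool) \<Rightarrow> bool" where
  "simple_graph V E \<longleftrightarrow> finite V \<and> (\<forall>x\<in>V. \<forall>y\<in>V. E x y \<longrightarrow> E y x) \<and> (\<forall>x\<in>V. \<not> E x x)"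

definition bipartite_on :: "('a \<Rightarrow> 'a \<Rightarrow> bool) \<Rightarrow> 'a set \<Rightarrow> bool" where
  "bipartite_on E S \<longleftrightarrow> (\<exists>c :: 'a \<Rightarrow> bool. \<forall>x\<in>S. \<forall>y\<in>S. E x y \<longrightarrow> c x \<noteq> c y)"

definition maximal_bipartite :: "'a set \<Rightarrow> ('a \<Rightarrow> 'a \<Rightarrow> bool) \<Rightarrow> 'a set \<Rightarrow> bool" where
  "maximal_bipartite V E S \<longleftrightarrow> S \<subseteq> V \<and> bipartite_on E S \<and>
     (\<forall>T. S \<subset> T \<and> T \<subseteq> V \<longrightarrow> \<not> bipartite_on E T)"

definition well_bicovered :: "'a set \<Rightarrow> ('a \<Rightarrow> 'a \<Rightarrow> bool) \<Rightarrow> bool" where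
  "well_bicovered V E \<longleftrightarrow>
     (\<forall>S T. maximal_bipartite V E S \<and> maximal_bipartite V E T \<longrightarrow> card S = card T)"

definition lex_prod_edges :: "('a \<Rightarrow> 'a \<Rightarrow> bool) \<Rightarrow> ('b \<Rightarrow> 'b \<Rightarrow> bool) \<Rightarrow> ('a \<times> 'b) \<Rightarrow> ('a \<times> 'b) \<Rightarrow> bool" where
  "lex_prod_edges EG EH = (\<lambda>(u, v) (x, y). EG u x \<or> (u = x \<and> EH v y))"

definition lex_prod_verts :: "'a set \<Rightarrow> 'b set \<Rightarrow> ('a \<times> 'b) set" where
  "lex_prod_verts VG VH = VG \<times> VH"

definition empty_graph_verts :: "nat \<Rightarrow> nat set" where
  "empty_graph_verts m = {0..<m}"

definition empty_graph_edges :: "nat \<Rightarrow> nat \<Rightarrow> bool" where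
  "empty_graph_edges = (\<lambda>_ _. False)"

end

theory Submission
  imports Defs
begin

text \<open>Every edge of \<open>G \<circ> H\<close> with \<open>H\<close> edgeless on \<open>A\<close> lies over an edge of \<open>G\<close>, so the
  fibres \<open>{u} \<times> A\<close> are independent and a bipartite set \<open>S\<close> of the product can be saturated to
  \<open>fst ` S \<times> A\<close> without losing bipartiteness (colour each fibre like a representative).
  Hence the maximal bipartite sets of \<open>G \<circ> H\<close> are exactly the sets \<open>T \<times> A\<close> with \<open>T\<close> maximal
  bipartite in \<open>G\<close>, and their orders are the orders of those of \<open>G\<close> multiplied by \<open>|A|\<close>.\<close>

lemma lex_prod_edges_edgeless [simp]:
  "lex_prod_edges E (\<lambda>_ _. False) p q \<longleftrightarrow> E (fst p) (fst q)"
  by (cases p; cases q) (simp add: lex_prod_edges_def)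

lemma maximal_bipartite_iff:
  "maximal_bipartite V E S \<longleftrightarrow>
     S \<subseteq> V \<and> bipartite_on E S \<and> (\<forall>T. S \<subseteq> T \<and> T \<subseteq> V \<and> bipartite_on E T \<longrightarrow> T = S)"
  unfolding maximal_bipartite_def by blast

lemma bipartite_on_lex_prod_fst_image:
  assumes "bipartite_on (lex_prod_edges E EH) S"
  shows "bipartite_on E (fst ` S)"
proof -
  obtain c :: "_ \<Rightarrow> bool" where c: "\<forall>p\<in>S. \<forall>q\<in>S. lex_prod_edges E EH p q \<longrightarrow> c p \<noteq> c q"
    using assms unfolding bipartite_on_def by blast
  let ?rep = "inv_into S fst"
  have rep: "?rep u \<in> S" "fst (?rep u) = u" if "u \<in> fst ` S" for u
    using that by (auto intro: inv_into_into f_inv_into_f)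
  have "\<forall>u\<in>fst ` S. \<forall>v\<in>fst ` S. E u v \<longrightarrow> (c \<circ> ?rep) u \<noteq> (c \<circ> ?rep) v"
  proof (intro ballI impI)
    fix u v assume uv: "u \<in> fst ` S" "v \<in> fst ` S" "E u v"
    then have "lex_prod_edges E EH (?rep u) (?rep v)"
      using rep by (simp add: lex_prod_edges_def case_prod_beta)
    then show "(c \<circ> ?rep) u \<noteq> (c \<circ> ?rep) v"
      using c rep(1) uv(1,2) by simp
  qed
  then show ?thesis
    unfolding bipartite_on_def by (rule exI[of _ "c \<circ> ?rep"])
qed

lemma bipartite_on_lex_prod_edgeless_times:
  assumes "bipartite_on E T"
  shows "bipartite_on (lex_prod_edges E (\<lambda>_ _. False)) (T \<times> A)"
proof -
  obtain c :: "_ \<Rightarrow> bool" where "\<forall>x\<in>T. \<forall>y\<in>T. E x y \<longrightarrow> c x \<noteq> c y"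
    using assms unfolding bipartite_on_def by blast
  then show ?thesis
    unfolding bipartite_on_def by (intro exI[of _ "c \<circ> fst"]) auto
qed

lemma maximal_bipartite_lex_prod_edgeless_times:
  assumes max: "maximal_bipartite V E T" and "A \<noteq> {}"
  shows "maximal_bipartite (V \<times> A) (lex_prod_edges E (\<lambda>_ _. False)) (T \<times> A)"
    (is "maximal_bipartite _ ?F _")
proof -
  have "S = T \<times> A" if S: "T \<times> A \<subseteq> S" "S \<subseteq> V \<times> A" "bipartite_on ?F S" for S
  proof -
    have "T \<subseteq> fst ` S"
      using S(1) \<open>A \<noteq> {}\<close> by (metis fst_image_times image_mono)
    moreover have "fst ` S \<subseteq> V"
      using S(2) by force
    moreover have "bipartite_on E (fst ` S)"
      using S(3) by (rule bipartite_on_lex_prod_fst_image)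
    ultimately have "fst ` S = T"
      using max unfolding maximal_bipartite_iff by blast
    then have "S \<subseteq> T \<times> A"
      using S(2) by force
    with S(1) show ?thesis by blast
  qed
  moreover have "T \<times> A \<subseteq> V \<times> A" "bipartite_on ?F (T \<times> A)"
    using max bipartite_on_lex_prod_edgeless_times unfolding maximal_bipartite_iff by auto
  ultimately show ?thesis
    unfolding maximal_bipartite_iff by blast
qed

lemma maximal_bipartite_lex_prod_edgeless_fst_image:
  assumes max: "maximal_bipartite (V \<times> A) (lex_prod_edges E (\<lambda>_ _. False)) S" and "A \<noteq> {}"
  shows "S = fst ` S \<times> A" and "maximal_bipartite V E (fst ` S)"
proof -
  let ?F = "lex_prod_edges E (\<lambda>_ _. False)"
  have S: "S \<subseteq> V \<times> A" "bipartite_on ?F S"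
    using max unfolding maximal_bipartite_iff by auto
  have bip: "bipartite_on E (fst ` S)"
    using S(2) by (rule bipartite_on_lex_prod_fst_image)
  have subset: "S \<subseteq> fst ` S \<times> A" "fst ` S \<subseteq> V"
    using S(1) by force+
  have saturated: "U \<times> A = S" if "fst ` S \<subseteq> U" "U \<subseteq> V" "bipartite_on E U" for U
  proof -
    have "S \<subseteq> U \<times> A" "U \<times> A \<subseteq> V \<times> A"
      using subset that(1,2) by blast+
    moreover have "bipartite_on ?F (U \<times> A)"
      using that(3) by (rule bipartite_on_lex_prod_edgeless_times)
    ultimately show ?thesis
      using max unfolding maximal_bipartite_iff by blast
  qed
  then show eq: "S = fst ` S \<times> A"
    using subset bip by blast
  have "U = fst ` S" if "fst ` S \<subseteq> U" "U \<subseteq> V" "bipartite_on E U" for U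
    using saturated[OF that] eq \<open>A \<noteq> {}\<close> by (metis fst_image_times)
  with subset(2) bip show "maximal_bipartite V E (fst ` S)"
    unfolding maximal_bipartite_iff by blast
qed

lemma maximal_bipartite_lex_prod_edgeless_iff:
  assumes "A \<noteq> {}"
  shows "maximal_bipartite (V \<times> A) (lex_prod_edges E (\<lambda>_ _. False)) S \<longleftrightarrow>
         (\<exists>T. S = T \<times> A \<and> maximal_bipartite V E T)"
proof
  assume "maximal_bipartite (V \<times> A) (lex_prod_edges E (\<lambda>_ _. False)) S"
  from maximal_bipartite_lex_prod_edgeless_fst_image[OF this assms]
  show "\<exists>T. S = T \<times> A \<and> maximal_bipartite V E T" by blast
next
  assume "\<exists>T. S = T \<times> A \<and> maximal_bipartite V E T"
  with maximal_bipartite_lex_prod_edgeless_times[OF _ assms]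
  show "maximal_bipartite (V \<times> A) (lex_prod_edges E (\<lambda>_ _. False)) S" by blast
qed

lemma well_bicovered_lex_prod_edgeless_iff:
  fixes V :: "'a set" and A :: "'b set"
  assumes "finite A" "A \<noteq> {}"
  shows "well_bicovered (V \<times> A) (lex_prod_edges E (\<lambda>_ _. False)) \<longleftrightarrow> well_bicovered V E"
proof -
  have "card (T \<times> A) = card (U \<times> A) \<longleftrightarrow> card T = card U" for T U :: "'a set"
    using assms by (simp add: card_cartesian_product)
  then show ?thesis
    unfolding well_bicovered_def maximal_bipartite_lex_prod_edgeless_iff[OF assms(2)]
    by blast
qed

theorem mainTheorem5:
  fixes V :: "'a set" and E :: "'a \<Rightarrow> 'a \<Rightarrow> bool" and m :: nat
  assumes "simple_graph V E" and "m \<ge> 1"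
  shows "well_bicovered (lex_prod_verts V (empty_graph_verts m))
                        (lex_prod_edges E empty_graph_edges)
         \<longleftrightarrow> well_bicovered V E"
  using well_bicovered_lex_prod_edgeless_iff[of "{0..<m}" V E] assms(2)
  by (simp add: lex_prod_verts_def empty_graph_verts_def empty_graph_edges_def)

end
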